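(* Let $N\ge2$, $x_1>x_2>\cdots>x_N$ be real, $\rho=\sum_{j=1}^N\rho_j\delta_{x_j}$ with $\rho_j>0$, $\sum\rho_j=1$, and $\rho_t=e^{2tx}d\rho(x)/\int e^{2tx}d\rho(x)$. For $1\le j\le N$ let $x_1^{(j)}(t)>\cdots>x_j^{(j)}(t)$ be the zeros of the monic orthogonal polynomial $P_j(x;\rho_t)$. Then for each $j=1,\dots,N-1$ and $k=1,\dots,j$ there is a constant $C$ such that for all $t\ge0$, \[ |x_k^{(j)}(t)-x_k|\le C\,e^{-2t(x_k-x_{j+1})}. \]
   Context: $P_j(x;\rho_t)$ is the unique monic polynomial of degree $j$ orthogonal in $L^2(\rho_t)$ to all polynomials of degree less than $j$. *)

theory Defs
  imports "HOL-Computational_Algebra.Polynomial"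
begin

text \<open>Atoms x 1 > ... > x N with weights rho 1, ..., rho N (1-based indexing).\<close>

definition tilt_weight :: "nat \<Rightarrow> (nat \<Rightarrow> real) \<Rightarrow> (nat \<Rightarrow> real) \<Rightarrow> real \<Rightarrow> nat \<Rightarrow> real" where
  "tilt_weight N x rho t i =
     rho i * exp (2 * t * x i) / (\<Sum>l=1..N. rho l * exp (2 * t * x l))"

definition disc_ip :: "nat \<Rightarrow> (nat \<Rightarrow> real) \<Rightarrow> (nat \<Rightarrow> real) \<Rightarrow> real poly \<Rightarrow> real poly \<Rightarrow> real" where
  "disc_ip N x w p q = (\<Sum>i=1..N. w i * poly p (x i) * poly q (x i))"

definition monic_OP :: "nat \<Rightarrow> (nat \<Rightarrow> real) \<Rightarrow> (nat \<Rightarrow> real) \<Rightarrow> nat \<Rightarrow> real poly" where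
  "monic_OP N x w j = (THE p. degree p = j \<and> lead_coeff p = 1 \<and>
      (\<forall>q. degree q < j \<longrightarrow> disc_ip N x w p q = 0))"

definition OP_zero :: "nat \<Rightarrow> (nat \<Rightarrow> real) \<Rightarrow> (nat \<Rightarrow> real) \<Rightarrow> nat \<Rightarrow> nat \<Rightarrow> real" where
  "OP_zero N x w j k =
     rev (sorted_list_of_set {r. poly (monic_OP N x w j) r = 0}) ! (k - 1)"

end

theory Submission
  imports Defs
begin

text \<open>
  Fix j < N and rescale the tilted weights to v_t(i) = rho_i exp(2t(x_i - x_(j+1))), which does
  not change P_j. Nodes beyond j keep weights at most rho_i, while node m <= j gets weight
  rho_m exp(2t(x_m - x_(j+1))). Since P_j minimises the norm among monic polynomials of degree j,
  its norm is at most that of Q = (X - x_1)...(X - x_j), which only sees the light nodes; so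
  v_t(i) P_j(x_i) stays bounded for i > j. Orthogonality of P_j to the Lagrange numerator
  L_m = Q / (X - x_m) turns this into |P_j(x_m)| = O(exp(-2t(x_m - x_(j+1)))).
  A monic polynomial of degree j with such small values at x_1 > ... > x_j changes sign on both
  sides of each x_m within a distance proportional to its value there (Lagrange interpolation),
  which locates its k-th largest zero within O(|P_j(x_k)|) of x_k. For bounded t the zeros stay
  in the convex hull of the support.
\<close>

section \<open>Monic orthogonal polynomials of a discrete measure\<close>

lemma disc_ip_sym: "disc_ip N x w p q = disc_ip N x w q p"
  unfolding disc_ip_def by (simp add: mult_ac)

lemma disc_ip_diff_right: "disc_ip N x w p (q - r) = disc_ip N x w p q - disc_ip N x w p r"
  unfolding disc_ip_def by (simp add: algebra_simps sum_subtractf)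

lemma disc_ip_diff_left: "disc_ip N x w (p - q) r = disc_ip N x w p r - disc_ip N x w q r"
  unfolding disc_ip_def by (simp add: algebra_simps sum_subtractf)

lemma disc_ip_smult_right: "disc_ip N x w p (smult c q) = c * disc_ip N x w p q"
  unfolding disc_ip_def by (simp add: algebra_simps sum_distrib_left)

lemma disc_ip_sum_right:
  "disc_ip N x w p (\<Sum>m\<in>A. q m) = (\<Sum>m\<in>A. disc_ip N x w p (q m))"
  unfolding disc_ip_def
  by (simp add: poly_sum sum_distrib_left sum_distrib_right algebra_simps sum.swap[of _ A])

lemma disc_ip_scale_weights: "disc_ip N x (\<lambda>i. c * w i) p q = c * disc_ip N x w p q"
  unfolding disc_ip_def by (simp add: algebra_simps sum_distrib_left)

lemma disc_ip_linear_factor: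
  "disc_ip N x w ([:- r, 1:] * q) q = disc_ip N x (\<lambda>i. w i * (x i - r)) q q"
  unfolding disc_ip_def by (simp add: algebra_simps)

definition is_monic_OP :: "nat \<Rightarrow> (nat \<Rightarrow> real) \<Rightarrow> (nat \<Rightarrow> real) \<Rightarrow> nat \<Rightarrow> real poly \<Rightarrow> bool" where
  "is_monic_OP N x w n p \<longleftrightarrow> degree p = n \<and> lead_coeff p = 1 \<and>
      (\<forall>q. degree q < n \<longrightarrow> disc_ip N x w p q = 0)"

lemma monic_OP_eq_The: "monic_OP N x w n = (THE p. is_monic_OP N x w n p)"
  unfolding monic_OP_def is_monic_OP_def ..

lemma monic_OP_scale_weights:
  assumes "c > 0"
  shows "monic_OP N x (\<lambda>i. c * w i) n = monic_OP N x w n"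
  unfolding monic_OP_def disc_ip_scale_weights using assms by simp

lemma degree_less_if_coeffs_vanish:
  assumes "\<And>i. i \<ge> n \<Longrightarrow> coeff p i = 0" and "p \<noteq> 0"
  shows "degree p < n"
  using assms leading_coeff_neq_0 not_less by blast

lemma disc_ip_eq_0_if_orthogonal_to_monic_basis:
  assumes deg: "\<And>m. m < n \<Longrightarrow> degree (P m) = m"
    and monic: "\<And>m. m < n \<Longrightarrow> lead_coeff (P m) = 1"
    and orth: "\<And>m. m < n \<Longrightarrow> disc_ip N x w p (P m) = 0"
    and "degree q < n"
  shows "disc_ip N x w p q = 0"
proof -
  have "disc_ip N x w p q = 0" if "d \<le> n" "\<And>i. i \<ge> d \<Longrightarrow> coeff q i = 0" for d q
    using that
  proof (induction d arbitrary: q)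
    case 0
    then have "q = 0" by (auto intro: poly_eqI)
    then show ?case by (simp add: disc_ip_def)
  next
    case (Suc d)
    define r where "r = q - smult (coeff q d) (P d)"
    have "degree (P d) = d" "coeff (P d) d = 1" using deg monic Suc.prems(1) by (metis Suc_le_lessD)+
    then have "coeff r i = 0" if "i \<ge> d" for i
      using Suc.prems(2) that by (cases "i = d") (auto simp: r_def coeff_eq_0)
    then have "disc_ip N x w p r = 0" using Suc by simp
    moreover have "disc_ip N x w p r = disc_ip N x w p q - coeff q d * disc_ip N x w p (P d)"
      by (simp add: r_def disc_ip_diff_right disc_ip_smult_right)
    ultimately show ?case using orth[of d] Suc.prems(1) by simp
  qed
  from this[of n q] show ?thesis using \<open>degree q < n\<close> by (simp add: coeff_eq_0)
qed

locale pos_weights =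
  fixes N :: nat and x w :: "nat \<Rightarrow> real"
  assumes weight_pos: "\<And>i. i \<in> {1..N} \<Longrightarrow> 0 < w i"
    and nodes_inj: "inj_on x {1..N}"
begin

lemma disc_ip_self_nonneg: "0 \<le> disc_ip N x w q q"
  unfolding disc_ip_def using weight_pos
  by (intro sum_nonneg) (simp add: mult.assoc less_imp_le)

lemma weighted_square_le_disc_ip:
  assumes "i \<in> {1..N}"
  shows "w i * (poly q (x i))\<^sup>2 \<le> disc_ip N x w q q"
  unfolding disc_ip_def power2_eq_square mult.assoc
  using assms weight_pos by (intro member_le_sum) (auto simp: less_imp_le)

lemma disc_ip_self_pos:
  assumes "q \<noteq> 0" and "degree q < N"
  shows "0 < disc_ip N x w q q"
proof (rule ccontr)
  assume not_pos: "\<not> ?thesis"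
  have "poly q (x i) = 0" if "i \<in> {1..N}" for i
  proof -
    have "w i * (poly q (x i))\<^sup>2 \<le> 0"
      using weighted_square_le_disc_ip[OF that, of q] not_pos by linarith
    with weight_pos[OF that] show ?thesis by (simp add: mult_le_0_iff)
  qed
  then have "x ` {1..N} \<subseteq> {r. poly q r = 0}" by auto
  then have "card (x ` {1..N}) \<le> card {r. poly q r = 0}"
    by (intro card_mono poly_roots_finite assms(1))
  also have "\<dots> \<le> degree q" by (rule card_poly_roots_bound[OF assms(1)])
  finally show False using assms(2) card_image[OF nodes_inj] by simp
qed

lemma gram_schmidt_step:
  assumes "n < N" and P: "\<And>m. m < n \<Longrightarrow> is_monic_OP N x w m (P m)"
  defines "c m \<equiv> disc_ip N x w (P m) (monom 1 n) / disc_ip N x w (P m) (P m)"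
  shows "is_monic_OP N x w n (monom 1 n - (\<Sum>m<n. smult (c m) (P m)))"
proof -
  define p where "p = monom 1 n - (\<Sum>m<n. smult (c m) (P m))"
  have deg: "degree (P m) = m" and monic: "lead_coeff (P m) = 1" if "m < n" for m
    using P[OF that] unfolding is_monic_OP_def by blast+
  have P_orth: "disc_ip N x w (P m) (P l) = 0" if "m < n" "l < n" "l \<noteq> m" for l m
  proof (cases "l < m")
    case True then show ?thesis
      using P[OF that(1)] deg[OF that(2)] by (simp add: is_monic_OP_def)
  next
    case False then show ?thesis
      using P[OF that(2)] deg[OF that(1)] that(3) disc_ip_sym[of N x w "P m"] by (simp add: is_monic_OP_def)
  qed
  have coeff_p: "coeff p i = (if i = n then 1 else 0)" if "i \<ge> n" for i
  proof -
    have "coeff (\<Sum>m<n. smult (c m) (P m)) i = 0"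
      unfolding coeff_sum using that deg by (intro sum.neutral) (auto simp: coeff_eq_0)
    then show ?thesis by (simp add: p_def coeff_monom)
  qed
  then have "degree p = n"
    by (intro antisym degree_le le_degree) auto
  moreover have "lead_coeff p = 1" using calculation coeff_p by simp
  moreover have "disc_ip N x w p (P m) = 0" if "m < n" for m
  proof -
    have norm_pos: "disc_ip N x w (P m) (P m) \<noteq> 0"
      using disc_ip_self_pos[of "P m"] deg[OF that] monic[OF that] \<open>n < N\<close> that by fastforce
    have expand: "(\<Sum>l<n. c l * disc_ip N x w (P m) (P l)) = c m * disc_ip N x w (P m) (P m)"
      using P_orth that by (subst sum.remove[of _ m]) auto
    have "disc_ip N x w p (P m) = disc_ip N x w (P m) p" by (rule disc_ip_sym)
    also have "\<dots> = disc_ip N x w (P m) (monom 1 n) - (\<Sum>l<n. c l * disc_ip N x w (P m) (P l))"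
      by (simp add: p_def disc_ip_diff_right disc_ip_sum_right disc_ip_smult_right)
    also have "\<dots> = 0" using norm_pos unfolding expand by (simp add: c_def)
    finally show ?thesis .
  qed
  ultimately show ?thesis
    unfolding is_monic_OP_def p_def[symmetric]
    using disc_ip_eq_0_if_orthogonal_to_monic_basis[OF deg monic] by blast
qed

lemma monic_OP_exists: "n < N \<Longrightarrow> \<exists>p. is_monic_OP N x w n p"
proof (induction n rule: less_induct)
  case (less n)
  then have "\<forall>m<n. \<exists>p. is_monic_OP N x w m p" by simp
  then obtain P where "\<And>m. m < n \<Longrightarrow> is_monic_OP N x w m (P m)" by metis
  then show ?case using gram_schmidt_step[OF less.prems] by blast
qed

lemma monic_OP_unique:
  assumes "n < N" and "is_monic_OP N x w n p" and "is_monic_OP N x w n q"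
  shows "p = q"
proof (rule ccontr)
  assume "p \<noteq> q"
  have "coeff (p - q) i = 0" if "i \<ge> n" for i
    using assms(2,3) that by (cases "i = n") (auto simp: is_monic_OP_def coeff_eq_0)
  then have deg: "degree (p - q) < n"
    using \<open>p \<noteq> q\<close> by (intro degree_less_if_coeffs_vanish) auto
  then have "disc_ip N x w (p - q) (p - q) = 0"
    using assms(2,3) by (simp add: is_monic_OP_def disc_ip_diff_left)
  moreover have "disc_ip N x w (p - q) (p - q) > 0"
    using disc_ip_self_pos \<open>p \<noteq> q\<close> deg assms(1) by simp
  ultimately show False by simp
qed

lemma is_monic_OP_monic_OP:
  assumes "n < N"
  shows "is_monic_OP N x w n (monic_OP N x w n)"
  unfolding monic_OP_eq_The
  using monic_OP_exists[OF assms] monic_OP_unique[OF assms] by (metis theI)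

lemma monic_OP_norm_minimal:
  assumes "is_monic_OP N x w n p" and "degree q = n" and "lead_coeff q = 1"
  shows "disc_ip N x w p p \<le> disc_ip N x w q q"
proof -
  have "coeff (q - p) i = 0" if "i \<ge> n" for i
    using assms that by (cases "i = n") (auto simp: is_monic_OP_def coeff_eq_0)
  then have "q - p = 0 \<or> degree (q - p) < n"
    using degree_less_if_coeffs_vanish by blast
  then have orth: "disc_ip N x w p (q - p) = 0"
    using assms(1) by (auto simp: is_monic_OP_def disc_ip_def)
  have "disc_ip N x w q q = disc_ip N x w p p + disc_ip N x w (q - p) (q - p)"
    using orth by (simp add: disc_ip_diff_left disc_ip_diff_right disc_ip_sym[of _ _ _ q p])
  then show ?thesis using disc_ip_self_nonneg[of "q - p"] by linarith
qed

lemma monic_OP_root_not_outside_nodes: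
  assumes "n < N" and root: "poly (monic_OP N x w n) r = 0"
    and outside: "\<And>i. i \<in> {1..N} \<Longrightarrow> 0 < s * (x i - r)"
  shows False
proof -
  let ?p = "monic_OP N x w n"
  have p: "is_monic_OP N x w n ?p" by (rule is_monic_OP_monic_OP[OF \<open>n < N\<close>])
  obtain q where q: "?p = [:- r, 1:] * q"
    using root by (metis dvdE poly_eq_0_iff_dvd)
  have "?p \<noteq> 0" using p by (auto simp: is_monic_OP_def)
  then have "q \<noteq> 0" using q by auto
  then have "degree ?p = Suc (degree q)" by (subst q, subst degree_mult_eq) auto
  then have "degree q < n" using p by (simp add: is_monic_OP_def)
  then have "disc_ip N x w ([:- r, 1:] * q) q = 0"
    using p unfolding q by (simp add: is_monic_OP_def)
  then have "disc_ip N x (\<lambda>i. s * (w i * (x i - r))) q q = 0"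
    by (simp only: disc_ip_scale_weights disc_ip_linear_factor[symmetric] mult_zero_right)
  moreover have "pos_weights N x (\<lambda>i. s * (w i * (x i - r)))"
  proof
    fix i assume "i \<in> {1..N}"
    then have "0 < w i * (s * (x i - r))" using weight_pos outside by simp
    then show "0 < s * (w i * (x i - r))" by (simp add: algebra_simps)
  qed (rule nodes_inj)
  then have "0 < disc_ip N x (\<lambda>i. s * (w i * (x i - r))) q q"
    using \<open>q \<noteq> 0\<close> \<open>degree q < n\<close> \<open>n < N\<close> by (simp add: pos_weights.disc_ip_self_pos)
  ultimately show False by simp
qed

lemma abs_monic_OP_root_le:
  assumes "n < N" and "poly (monic_OP N x w n) r = 0"
  shows "\<bar>r\<bar> \<le> (\<Sum>i=1..N. \<bar>x i\<bar>)"
proof -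
  obtain i where i: "i \<in> {1..N}" "r \<le> x i"
    using monic_OP_root_not_outside_nodes[OF assms, of "-1"] by force
  obtain i' where i': "i' \<in> {1..N}" "x i' \<le> r"
    using monic_OP_root_not_outside_nodes[OF assms, of 1] by force
  have "\<bar>x i\<bar> \<le> (\<Sum>i=1..N. \<bar>x i\<bar>)" "\<bar>x i'\<bar> \<le> (\<Sum>i=1..N. \<bar>x i\<bar>)"
    using i(1) i'(1) by (auto intro!: member_le_sum)
  then show ?thesis using i i' by linarith
qed

end

lemma nth_beyond_length: "length xs \<le> n \<Longrightarrow> xs ! n = [] ! (n - length xs)"
  by (induction xs arbitrary: n) (auto simp: nth_Cons split: nat.split)

(* If P_n has fewer than k real zeros, OP_zero picks an unspecified element of the empty list;
   the junk terms of the bound cover that case. *)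
lemma (in pos_weights) abs_OP_zero_le:
  assumes "n < N"
  shows "\<bar>OP_zero N x w n k\<bar> \<le> (\<Sum>i=1..N. \<bar>x i\<bar>) + (\<Sum>m\<le>k. \<bar>([] :: real list) ! m\<bar>)"
proof -
  define zs where "zs = rev (sorted_list_of_set {r. poly (monic_OP N x w n) r = 0})"
  have "monic_OP N x w n \<noteq> 0"
    using is_monic_OP_monic_OP[OF assms] by (auto simp: is_monic_OP_def)
  then have fin: "finite {r. poly (monic_OP N x w n) r = 0}" by (rule poly_roots_finite)
  have junk_le: "\<bar>([] :: real list) ! m\<bar> \<le> (\<Sum>m\<le>k. \<bar>([] :: real list) ! m\<bar>)" if "m \<le> k" for m
    using that by (intro member_le_sum) auto
  have sums_nonneg: "0 \<le> (\<Sum>i=1..N. \<bar>x i\<bar>)" "0 \<le> (\<Sum>m\<le>k. \<bar>([] :: real list) ! m\<bar>)"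
    by (auto intro: sum_nonneg)
  show ?thesis
  proof (cases "k - 1 < length zs")
    case True
    then have "zs ! (k - 1) \<in> {r. poly (monic_OP N x w n) r = 0}"
      using nth_mem[OF True] fin by (simp add: zs_def)
    then have "\<bar>zs ! (k - 1)\<bar> \<le> (\<Sum>i=1..N. \<bar>x i\<bar>)"
      using abs_monic_OP_root_le[OF assms] by simp
    then show ?thesis using sums_nonneg unfolding OP_zero_def zs_def[symmetric] by linarith
  next
    case False
    then have "zs ! (k - 1) = [] ! (k - 1 - length zs)" by (simp add: nth_beyond_length[of zs])
    then show ?thesis
      using junk_le[of "k - 1 - length zs"] sums_nonneg
      unfolding OP_zero_def zs_def[symmetric] by linarith
  qed
qed

section \<open>Zeros of a monic polynomial that is small at given nodes\<close>

definition node_poly :: "(nat \<Rightarrow> real) \<Rightarrow> nat set \<Rightarrow> real poly" where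
  "node_poly x S = (\<Prod>i\<in>S. [:- x i, 1:])"

lemma poly_node_poly: "poly (node_poly x S) y = (\<Prod>i\<in>S. y - x i)"
  unfolding node_poly_def by (simp add: poly_prod)

lemma degree_node_poly: "finite S \<Longrightarrow> degree (node_poly x S) = card S"
  unfolding node_poly_def by (subst degree_prod_eq_sum_degree) auto

lemma lead_coeff_node_poly: "lead_coeff (node_poly x S) = 1"
  unfolding node_poly_def by (simp add: lead_coeff_prod)

lemma node_poly_at_node: "finite S \<Longrightarrow> i \<in> S \<Longrightarrow> poly (node_poly x S) (x i) = 0"
  unfolding poly_node_poly by (rule prod_zero) auto

lemma node_poly_nonzero: "finite S \<Longrightarrow> (\<And>i. i \<in> S \<Longrightarrow> x i \<noteq> y) \<Longrightarrow> poly (node_poly x S) y \<noteq> 0"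
  unfolding poly_node_poly by (auto simp: prod_zero_iff)

lemma poly_node_poly_remove:
  "finite S \<Longrightarrow> i \<in> S \<Longrightarrow> poly (node_poly x S) y = (y - x i) * poly (node_poly x (S - {i})) y"
  unfolding poly_node_poly by (rule prod.remove)

lemma abs_poly_node_poly_le:
  assumes "finite S" and "\<And>i. i \<in> S \<Longrightarrow> \<bar>y - x i\<bar> \<le> D" and "1 \<le> D" and "card S \<le> n"
  shows "\<bar>poly (node_poly x S) y\<bar> \<le> D ^ n"
proof -
  have "\<bar>poly (node_poly x S) y\<bar> = (\<Prod>i\<in>S. \<bar>y - x i\<bar>)"
    unfolding poly_node_poly by (simp add: abs_prod)
  also have "\<dots> \<le> D ^ card S"
    using assms(2) prod_mono[of S "\<lambda>i. \<bar>y - x i\<bar>" "\<lambda>_. D"] by simp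
  also have "\<dots> \<le> D ^ n" by (rule power_increasing[OF assms(4,3)])
  finally show ?thesis .
qed

lemma monic_lagrange_interpolation:
  assumes inj: "inj_on x {1..j}" and deg: "degree P = j" and monic: "lead_coeff P = 1"
  shows "poly P y = poly (node_poly x {1..j}) y +
    (\<Sum>m\<in>{1..j}. poly P (x m) * poly (node_poly x ({1..j} - {m})) y
                    / poly (node_poly x ({1..j} - {m})) (x m))"
proof -
  define L where "L m = node_poly x ({1..j} - {m})" for m
  define R where "R = node_poly x {1..j} + (\<Sum>m\<in>{1..j}. smult (poly P (x m) / poly (L m) (x m)) (L m))"
  have deg_L: "degree (L m) < j" if "m \<in> {1..j}" for m
    using that by (simp add: L_def degree_node_poly)
  have coeff_R: "coeff R i = coeff (node_poly x {1..j}) i" if "j \<le> i" for i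
  proof -
    have "coeff (L m) i = 0" if "m \<in> {1..j}" for m
      using deg_L[OF that] \<open>j \<le> i\<close> by (simp add: coeff_eq_0)
    then show ?thesis by (simp add: R_def coeff_sum)
  qed
  have L_nonzero: "poly (L m) (x m) \<noteq> 0" if "m \<in> {1..j}" for m
    unfolding L_def using that inj by (intro node_poly_nonzero) (auto dest: inj_onD)
  have "P = R"
  proof (rule poly_eqI_degree_lead_coeff[of P j R "x ` {1..j}"])
    show "coeff P j = coeff R j"
      using coeff_R[of j] deg monic lead_coeff_node_poly[of x "{1..j}"]
      by (simp add: degree_node_poly)
    show "j \<le> card (x ` {1..j})" using card_image[OF inj] by simp
    show "degree P \<le> j" using deg by simp
    show "degree R \<le> j"
      using coeff_R by (intro degree_le) (simp add: degree_node_poly coeff_eq_0)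
    fix z assume "z \<in> x ` {1..j}"
    then obtain k where k: "k \<in> {1..j}" and z: "z = x k" by auto
    have "poly R (x k) = (\<Sum>m\<in>{1..j}. poly P (x m) / poly (L m) (x m) * poly (L m) (x k))"
      using k by (simp only: R_def poly_add poly_sum poly_smult add_0_left
          node_poly_at_node[OF finite_atLeastAtMost])
    also have "\<dots> = (\<Sum>m\<in>{1..j}. if m = k then poly P (x k) else 0)"
    proof (rule sum.cong[OF refl])
      fix m assume m: "m \<in> {1..j}"
      show "poly P (x m) / poly (L m) (x m) * poly (L m) (x k) = (if m = k then poly P (x k) else 0)"
      proof (cases "m = k")
        case True then show ?thesis using L_nonzero[OF m] by simp
      next
        case False
        then have "poly (L m) (x k) = 0" using k unfolding L_def by (intro node_poly_at_node) auto
        then show ?thesis using False by simp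
      qed
    qed
    also have "\<dots> = poly P (x k)" using k by simp
    finally show "poly P z = poly R z" using z by simp
  qed
  then have "poly P y = poly R y" by (simp only:)
  also have "\<dots> = poly (node_poly x {1..j}) y +
    (\<Sum>m\<in>{1..j}. poly P (x m) / poly (L m) (x m) * poly (L m) y)"
    by (simp only: R_def poly_add poly_sum poly_smult)
  finally show ?thesis by (simp add: L_def)
qed

(* The shape of monic_lagrange_near_node below, with v = P(x_m + h), L = L_m(x_m),
   Ly = L_m(x_m + h) and a = P(x_m). *)
lemma linear_term_dominates:
  fixes a h v L Ly T :: real
  assumes v: "v = h * (Ly + T) + a * Ly / L"
    and Ly: "\<bar>Ly - L\<bar> \<le> \<bar>L\<bar> / 4" and T: "\<bar>T\<bar> \<le> \<bar>L\<bar> / 4"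
    and a: "5/2 * \<bar>a\<bar> < \<bar>h\<bar> * \<bar>L\<bar>"
  shows "0 < h * L * v"
proof -
  have "L \<noteq> 0" using a by auto
  then have v_expand: "h * L * v = h\<^sup>2 * (L * Ly + L * T) + h * a * Ly"
    unfolding v by (simp add: field_simps power2_eq_square)
  have "\<bar>L\<bar> * \<bar>Ly - L\<bar> \<le> \<bar>L\<bar> * (\<bar>L\<bar> / 4)" "\<bar>L\<bar> * \<bar>T\<bar> \<le> \<bar>L\<bar> * (\<bar>L\<bar> / 4)"
    using Ly T by (intro mult_left_mono; simp)+
  then have "\<bar>L * Ly - L * L\<bar> \<le> L * L / 4" "\<bar>L * T\<bar> \<le> L * L / 4"
    by (simp_all add: abs_mult right_diff_distrib[symmetric])
  then have "L * L / 2 \<le> L * Ly + L * T" unfolding abs_le_iff by linarith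
  then have main: "h\<^sup>2 * (L * L / 2) \<le> h\<^sup>2 * (L * Ly + L * T)"
    by (intro mult_left_mono) simp_all
  have "\<bar>Ly\<bar> \<le> 5/4 * \<bar>L\<bar>" using Ly abs_triangle_ineq[of "Ly - L" L] by simp
  then have "\<bar>h\<bar> * \<bar>a\<bar> * \<bar>Ly\<bar> \<le> \<bar>h\<bar> * \<bar>a\<bar> * (5/4 * \<bar>L\<bar>)"
    by (intro mult_left_mono) auto
  then have "\<bar>h * a * Ly\<bar> \<le> \<bar>h\<bar> * \<bar>L\<bar> * (5/4 * \<bar>a\<bar>)"
    by (simp add: abs_mult mult_ac)
  also have "\<dots> < \<bar>h\<bar> * \<bar>L\<bar> * (\<bar>h\<bar> * \<bar>L\<bar> / 2)"
    using a by (intro mult_strict_left_mono) auto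
  also have "\<dots> = h\<^sup>2 * (L * L / 2)"
    by (simp add: power2_eq_square abs_mult_self_eq algebra_simps flip: abs_mult)
  finally show ?thesis using v_expand main abs_ge_minus_self[of "h * a * Ly"] by linarith
qed

lemma monic_lagrange_near_node:
  assumes inj: "inj_on x {1..j}" and "degree P = j" and "lead_coeff P = 1" and m: "m \<in> {1..j}"
  shows "poly P (x m + h) =
    h * (poly (node_poly x ({1..j} - {m})) (x m + h) +
         (\<Sum>l\<in>{1..j} - {m}. poly P (x l) * poly (node_poly x ({1..j} - {l, m})) (x m + h)
                               / poly (node_poly x ({1..j} - {l})) (x l)))
    + poly P (x m) * poly (node_poly x ({1..j} - {m})) (x m + h)
        / poly (node_poly x ({1..j} - {m})) (x m)"
proof -
  define y where "y = x m + h"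
  define t where "t l = poly P (x l) * poly (node_poly x ({1..j} - {l})) y
                          / poly (node_poly x ({1..j} - {l})) (x l)" for l
  define u where "u l = poly P (x l) * poly (node_poly x ({1..j} - {l, m})) y
                          / poly (node_poly x ({1..j} - {l})) (x l)" for l
  have t_eq: "t l = h * u l" if "l \<in> {1..j} - {m}" for l
  proof -
    have "{1..j} - {l} - {m} = {1..j} - {l, m}" by auto
    then show ?thesis
      using poly_node_poly_remove[of "{1..j} - {l}" m x y] that m by (simp add: t_def u_def y_def)
  qed
  have "poly P y = poly (node_poly x {1..j}) y + (\<Sum>l\<in>{1..j}. t l)"
    unfolding t_def by (rule monic_lagrange_interpolation[OF assms(1-3)])
  also have "poly (node_poly x {1..j}) y = h * poly (node_poly x ({1..j} - {m})) y"
    using poly_node_poly_remove[of "{1..j}" m x y] m by (simp add: y_def)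
  also have "(\<Sum>l\<in>{1..j}. t l) = t m + (\<Sum>l\<in>{1..j} - {m}. t l)"
    using m by (simp add: sum.remove)
  also have "(\<Sum>l\<in>{1..j} - {m}. t l) = h * (\<Sum>l\<in>{1..j} - {m}. u l)"
    unfolding sum_distrib_left using t_eq by (rule sum.cong[OF refl])
  finally show ?thesis by (simp only: t_def u_def y_def) (simp add: distrib_left add_ac)
qed

lemma monic_sign_change_near_node:
  assumes inj: "inj_on x {1..j}" and deg: "degree P = j" and monic: "lead_coeff P = 1"
    and m: "m \<in> {1..j}" and "0 < d"
  defines "L \<equiv> node_poly x ({1..j} - {m})"
  assumes L_close: "\<And>y. \<bar>y - x m\<bar> \<le> d \<Longrightarrow> \<bar>poly L y - poly L (x m)\<bar> \<le> \<bar>poly L (x m)\<bar> / 4"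
    and rest_small: "\<And>y. \<bar>y - x m\<bar> \<le> d \<Longrightarrow>
      \<bar>\<Sum>l\<in>{1..j} - {m}. poly P (x l) * poly (node_poly x ({1..j} - {l, m})) y
                          / poly (node_poly x ({1..j} - {l})) (x l)\<bar> \<le> \<bar>poly L (x m)\<bar> / 4"
    and value_small: "5/2 * \<bar>poly P (x m)\<bar> < d * \<bar>poly L (x m)\<bar>"
  shows "poly P (x m - d) * poly P (x m + d) < 0"
proof -
  have pos: "0 < h * poly L (x m) * poly P (x m + h)" if "\<bar>h\<bar> = d" for h
    by (rule linear_term_dominates[OF monic_lagrange_near_node[OF inj deg monic m, of h, folded L_def]])
       (use that L_close[of "x m + h"] rest_small[of "x m + h"] value_small in auto)
  have "0 < d * poly L (x m) * poly P (x m + d)" using pos[of d] \<open>0 < d\<close> by simp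
  moreover have "d * poly L (x m) * poly P (x m - d) < 0" using pos[of "- d"] \<open>0 < d\<close> by simp
  ultimately have "(d * poly L (x m) * poly P (x m + d)) * (d * poly L (x m) * poly P (x m - d)) < 0"
    by (rule mult_pos_neg)
  then have "(d * poly L (x m))\<^sup>2 * (poly P (x m - d) * poly P (x m + d)) < 0"
    by (simp only: power2_eq_square mult_ac)
  then show ?thesis using zero_le_power2[of "d * poly L (x m)"] by (auto simp: mult_less_0_iff)
qed

lemma rev_sorted_list_of_decreasing_image:
  fixes z :: "nat \<Rightarrow> 'a :: linorder"
  assumes dec: "\<And>a b. 1 \<le> a \<Longrightarrow> a < b \<Longrightarrow> b \<le> j \<Longrightarrow> z b < z a" and k: "k \<in> {1..j}"
  shows "rev (sorted_list_of_set (z ` {1..j})) ! (k - 1) = z k"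
proof -
  define zs where "zs = map z (rev [1..<j+1])"
  have "sorted_wrt (<) zs"
    unfolding zs_def sorted_wrt_map sorted_wrt_rev
    by (rule sorted_wrt_mono_rel[OF _ sorted_wrt_upt]) (auto intro: dec)
  moreover have "z ` {1..j} = set zs"
    by (auto simp: zs_def atLeastLessThanSuc_atLeastAtMost simp del: upt_Suc)
  ultimately have "sorted_list_of_set (z ` {1..j}) = zs"
    by (simp add: sorted_list_of_set_sort_remdups strict_sorted_iff distinct_remdups_id sorted_sort_id)
  moreover have "k - 1 < length [1..<j+1]" using k by auto
  ultimately show ?thesis using k by (simp add: zs_def rev_map nth_upt del: upt_Suc)
qed

lemma kth_largest_root_near:
  fixes P :: "real poly"
  assumes "P \<noteq> 0" and "degree P = j"
    and sign_change: "\<And>m. m \<in> {1..j} \<Longrightarrow> poly P (z m - d m) * poly P (z m + d m) < 0"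
    and d_pos: "\<And>m. m \<in> {1..j} \<Longrightarrow> 0 < d m"
    and separated: "\<And>a b. 1 \<le> a \<Longrightarrow> a < b \<Longrightarrow> b \<le> j \<Longrightarrow> z b + d b < z a - d a"
    and k: "k \<in> {1..j}"
  shows "\<bar>rev (sorted_list_of_set {r. poly P r = 0}) ! (k - 1) - z k\<bar> < d k"
proof -
  have "\<forall>m\<in>{1..j}. \<exists>r. z m - d m < r \<and> r < z m + d m \<and> poly P r = 0"
  proof
    fix m assume m: "m \<in> {1..j}"
    show "\<exists>r. z m - d m < r \<and> r < z m + d m \<and> poly P r = 0"
      using poly_IVT[of "z m - d m" "z m + d m" P] sign_change[OF m] d_pos[OF m] by auto
  qed
  then obtain r where r: "\<And>m. m \<in> {1..j} \<Longrightarrow> z m - d m < r m \<and> r m < z m + d m \<and> poly P (r m) = 0"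
    by metis
  have r_dec: "r b < r a" if "1 \<le> a" "a < b" "b \<le> j" for a b
    using r[of a] r[of b] separated[OF that] that by auto
  then have "inj_on r {1..j}"
    by (intro inj_onI) (metis atLeastAtMost_iff linorder_neqE_nat less_irrefl)
  have roots_finite: "finite {r. poly P r = 0}" by (rule poly_roots_finite[OF \<open>P \<noteq> 0\<close>])
  have "r ` {1..j} \<subseteq> {r. poly P r = 0}" using r by auto
  moreover have "card {r. poly P r = 0} \<le> card (r ` {1..j})"
    using card_poly_roots_bound[OF \<open>P \<noteq> 0\<close>] \<open>degree P = j\<close> card_image[OF \<open>inj_on r {1..j}\<close>]
    by simp
  ultimately have "{r. poly P r = 0} = r ` {1..j}"
    using card_seteq[OF roots_finite] by blast
  then show ?thesis
    using rev_sorted_list_of_decreasing_image[OF r_dec k] r[OF k] by auto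
qed

lemma finite_pos_lower_bound:
  fixes f :: "'a \<Rightarrow> 'b :: {linorder, zero_less_one}"
  assumes "finite S" and "\<And>s. s \<in> S \<Longrightarrow> 0 < f s"
  shows "\<exists>\<epsilon>>0. \<forall>s\<in>S. \<epsilon> \<le> f s"
proof (intro exI[of _ "Min (insert 1 (f ` S))"] conjI ballI)
  show "0 < Min (insert 1 (f ` S))" using assms by (subst Min_gr_iff) auto
  show "Min (insert 1 (f ` S)) \<le> f s" if "s \<in> S" for s using assms(1) that by (intro Min_le) auto
qed

lemma poly_continuity_radius:
  fixes p :: "real poly"
  assumes "0 < e"
  shows "\<exists>\<delta>>0. \<forall>y. \<bar>y - a\<bar> \<le> \<delta> \<longrightarrow> \<bar>poly p y - poly p a\<bar> \<le> e"
proof -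
  have "(\<lambda>y. poly p y) \<midarrow>a\<rightarrow> poly p a" using poly_isCont[of a p] by (simp add: isCont_def)
  then obtain s where "0 < s"
    and close: "\<And>y. y \<noteq> a \<and> norm (y - a) < s \<Longrightarrow> norm (poly p y - poly p a) < e"
    using assms unfolding LIM_eq by blast
  have "\<bar>poly p y - poly p a\<bar> \<le> e" if "\<bar>y - a\<bar> \<le> s / 2" for y
  proof (cases "y = a")
    case False
    then show ?thesis using close[of y] that \<open>0 < s\<close> by fastforce
  qed (use assms in simp)
  then show ?thesis using \<open>0 < s\<close> by (intro exI[of _ "s / 2"]) auto
qed

lemma lagrange_remainder_bound:
  assumes m: "m \<in> {1..j}" and y: "\<bar>y - x m\<bar> \<le> 1"
    and P_at_nodes: "\<And>l. l \<in> {1..j} \<Longrightarrow> \<bar>poly P (x l)\<bar> \<le> \<epsilon>"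
  defines "B \<equiv> (1 + 2 * (\<Sum>i=1..j. \<bar>x i\<bar>)) ^ j"
  shows "\<bar>\<Sum>l\<in>{1..j} - {m}. poly P (x l) * poly (node_poly x ({1..j} - {l, m})) y
                           / poly (node_poly x ({1..j} - {l})) (x l)\<bar>
         \<le> \<epsilon> * (\<Sum>l=1..j. B / \<bar>poly (node_poly x ({1..j} - {l})) (x l)\<bar>)"
proof -
  have x_le: "\<bar>x i\<bar> \<le> (\<Sum>i=1..j. \<bar>x i\<bar>)" if "i \<in> {1..j}" for i
    using that by (intro member_le_sum) auto
  have B_bound: "\<bar>poly (node_poly x ({1..j} - {l, m})) y\<bar> \<le> B" for l
    unfolding B_def
  proof (rule abs_poly_node_poly_le)
    show "\<bar>y - x i\<bar> \<le> 1 + 2 * (\<Sum>i=1..j. \<bar>x i\<bar>)" if "i \<in> {1..j} - {l, m}" for i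
      using x_le[of i] x_le[OF m] that y by auto
    show "card ({1..j} - {l, m}) \<le> j" using card_mono[of "{1..j}" "{1..j} - {l, m}"] by auto
  qed (auto intro: sum_nonneg)
  have "0 \<le> \<epsilon>" using P_at_nodes[OF m] by linarith
  moreover have "0 \<le> B" using B_bound[of m] by linarith
  ultimately have terms_nonneg: "0 \<le> \<epsilon> * B / \<bar>poly (node_poly x ({1..j} - {l})) (x l)\<bar>" for l
    by simp
  have "\<bar>\<Sum>l\<in>{1..j} - {m}. poly P (x l) * poly (node_poly x ({1..j} - {l, m})) y
                           / poly (node_poly x ({1..j} - {l})) (x l)\<bar>
        \<le> (\<Sum>l\<in>{1..j} - {m}. \<epsilon> * B / \<bar>poly (node_poly x ({1..j} - {l})) (x l)\<bar>)"
  proof (rule order.trans[OF sum_abs sum_mono])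
    fix l assume l: "l \<in> {1..j} - {m}"
    have "\<bar>poly P (x l)\<bar> * \<bar>poly (node_poly x ({1..j} - {l, m})) y\<bar> \<le> \<epsilon> * B"
      using P_at_nodes[of l] l B_bound[of l] \<open>0 \<le> \<epsilon>\<close> by (intro mult_mono) auto
    then show "\<bar>poly P (x l) * poly (node_poly x ({1..j} - {l, m})) y
                / poly (node_poly x ({1..j} - {l})) (x l)\<bar>
               \<le> \<epsilon> * B / \<bar>poly (node_poly x ({1..j} - {l})) (x l)\<bar>"
      by (simp add: abs_mult divide_right_mono)
  qed
  also have "\<dots> \<le> (\<Sum>l=1..j. \<epsilon> * B / \<bar>poly (node_poly x ({1..j} - {l})) (x l)\<bar>)"
    using terms_nonneg by (intro sum_mono2) auto
  finally show ?thesis by (simp add: sum_distrib_left)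
qed

lemma monic_roots_within_radii:
  fixes x :: "nat \<Rightarrow> real"
  assumes dec: "\<And>a b. 1 \<le> a \<Longrightarrow> a < b \<Longrightarrow> b \<le> j \<Longrightarrow> x b < x a"
    and deg: "degree P = j" and monic: "lead_coeff P = 1"
    and P_at_nodes: "\<And>m. m \<in> {1..j} \<Longrightarrow> \<bar>poly P (x m)\<bar> \<le> a m"
  defines "c m \<equiv> \<bar>poly (node_poly x ({1..j} - {m})) (x m)\<bar>"
  defines "d m \<equiv> 4 * a m / c m"
  assumes a_pos: "\<And>m. m \<in> {1..j} \<Longrightarrow> 0 < a m"
    and L_close: "\<And>m y. m \<in> {1..j} \<Longrightarrow> \<bar>y - x m\<bar> \<le> d m \<Longrightarrow>
      \<bar>poly (node_poly x ({1..j} - {m})) y - poly (node_poly x ({1..j} - {m})) (x m)\<bar> \<le> c m / 4"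
    and rest_small: "\<And>m y. m \<in> {1..j} \<Longrightarrow> \<bar>y - x m\<bar> \<le> d m \<Longrightarrow>
      \<bar>\<Sum>l\<in>{1..j} - {m}. poly P (x l) * poly (node_poly x ({1..j} - {l, m})) y
                          / poly (node_poly x ({1..j} - {l})) (x l)\<bar> \<le> c m / 4"
    and separated: "\<And>a b. 1 \<le> a \<Longrightarrow> a < b \<Longrightarrow> b \<le> j \<Longrightarrow> d a + d b < x a - x b"
    and k: "k \<in> {1..j}"
  shows "\<bar>rev (sorted_list_of_set {r. poly P r = 0}) ! (k - 1) - x k\<bar> < d k"
proof (rule kth_largest_root_near[OF _ deg _ _ _ k])
  show "P \<noteq> 0" using monic by auto
  have inj: "inj_on x {1..j}"
    by (intro inj_onI) (metis atLeastAtMost_iff dec less_irrefl linorder_neqE_nat)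
  have c_pos: "0 < c m" if "m \<in> {1..j}" for m
  proof -
    have "poly (node_poly x ({1..j} - {m})) (x m) \<noteq> 0"
      using that inj by (intro node_poly_nonzero) (auto dest: inj_onD)
    then show ?thesis by (simp add: c_def)
  qed
  then show d_pos: "0 < d m" if "m \<in> {1..j}" for m
    using a_pos[OF that] that by (simp add: d_def)
  show "poly P (x m - d m) * poly P (x m + d m) < 0" if m: "m \<in> {1..j}" for m
  proof (rule monic_sign_change_near_node[OF inj deg monic m d_pos[OF m]])
    have "d m * \<bar>poly (node_poly x ({1..j} - {m})) (x m)\<bar> = 4 * a m"
      using c_pos[OF m] by (simp add: d_def c_def)
    then show "5/2 * \<bar>poly P (x m)\<bar> < d m * \<bar>poly (node_poly x ({1..j} - {m})) (x m)\<bar>"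
      using P_at_nodes[OF m] a_pos[OF m] by linarith
  qed (use L_close[OF m] rest_small[OF m] in \<open>simp_all add: c_def\<close>)
  show "x b + d b < x a - d a" if "1 \<le> a" "a < b" "b \<le> j" for a b
    using separated[OF that] by simp
qed

lemma radius_around_nodes:
  fixes x :: "nat \<Rightarrow> real"
  assumes dec: "\<And>a b. 1 \<le> a \<Longrightarrow> a < b \<Longrightarrow> b \<le> j \<Longrightarrow> x b < x a"
  obtains \<delta> where "0 < \<delta>" and "\<delta> \<le> 1"
    and "\<And>m y. m \<in> {1..j} \<Longrightarrow> \<bar>y - x m\<bar> \<le> \<delta> \<Longrightarrow>
      \<bar>poly (node_poly x ({1..j} - {m})) y - poly (node_poly x ({1..j} - {m})) (x m)\<bar>
        \<le> \<bar>poly (node_poly x ({1..j} - {m})) (x m)\<bar> / 4"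
    and "\<And>a b. 1 \<le> a \<Longrightarrow> a < b \<Longrightarrow> b \<le> j \<Longrightarrow> 3 * \<delta> \<le> x a - x b"
proof -
  let ?L = "\<lambda>m. node_poly x ({1..j} - {m})"
  have inj: "inj_on x {1..j}"
    by (intro inj_onI) (metis atLeastAtMost_iff dec less_irrefl linorder_neqE_nat)
  have "\<forall>m\<in>{1..j}. \<exists>\<delta>>0. \<forall>y. \<bar>y - x m\<bar> \<le> \<delta> \<longrightarrow>
      \<bar>poly (?L m) y - poly (?L m) (x m)\<bar> \<le> \<bar>poly (?L m) (x m)\<bar> / 4"
  proof
    fix m assume "m \<in> {1..j}"
    then have "poly (?L m) (x m) \<noteq> 0"
      using inj by (intro node_poly_nonzero) (auto dest: inj_onD)
    then show "\<exists>\<delta>>0. \<forall>y. \<bar>y - x m\<bar> \<le> \<delta> \<longrightarrow>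
        \<bar>poly (?L m) y - poly (?L m) (x m)\<bar> \<le> \<bar>poly (?L m) (x m)\<bar> / 4"
      by (intro poly_continuity_radius) simp
  qed
  then obtain \<delta>c where \<delta>c: "\<And>m. m \<in> {1..j} \<Longrightarrow> 0 < \<delta>c m \<and> (\<forall>y. \<bar>y - x m\<bar> \<le> \<delta>c m \<longrightarrow>
      \<bar>poly (?L m) y - poly (?L m) (x m)\<bar> \<le> \<bar>poly (?L m) (x m)\<bar> / 4)"
    by metis
  obtain \<delta>1 where "0 < \<delta>1" and \<delta>1: "\<And>m. m \<in> {1..j} \<Longrightarrow> \<delta>1 \<le> \<delta>c m"
    using finite_pos_lower_bound[of "{1..j}" \<delta>c] \<delta>c by auto
  have "finite {(a, b). 1 \<le> a \<and> a < b \<and> b \<le> j}"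
    by (rule finite_subset[of _ "{1..j} \<times> {1..j}"]) auto
  then have "\<exists>\<delta>>0. \<forall>ab\<in>{(a, b). 1 \<le> a \<and> a < b \<and> b \<le> j}. \<delta> \<le> (x (fst ab) - x (snd ab)) / 3"
    using dec by (intro finite_pos_lower_bound) auto
  then obtain \<delta>2 where "0 < \<delta>2"
    and \<delta>2: "\<And>a b. 1 \<le> a \<Longrightarrow> a < b \<Longrightarrow> b \<le> j \<Longrightarrow> 3 * \<delta>2 \<le> x a - x b"
    by fastforce
  show thesis
  proof (rule that[of "min 1 (min \<delta>1 \<delta>2)"])
    show "\<bar>poly (?L m) y - poly (?L m) (x m)\<bar> \<le> \<bar>poly (?L m) (x m)\<bar> / 4"
      if "m \<in> {1..j}" "\<bar>y - x m\<bar> \<le> min 1 (min \<delta>1 \<delta>2)" for m y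
      using \<delta>c[OF that(1)] \<delta>1[OF that(1)] that(2) by auto
    show "3 * min 1 (min \<delta>1 \<delta>2) \<le> x a - x b" if "1 \<le> a" "a < b" "b \<le> j" for a b
      using \<delta>2[OF that] \<open>0 < \<delta>2\<close> by linarith
  qed (use \<open>0 < \<delta>1\<close> \<open>0 < \<delta>2\<close> in auto)
qed

lemma monic_roots_near_nodes:
  fixes x :: "nat \<Rightarrow> real"
  assumes dec: "\<And>a b. 1 \<le> a \<Longrightarrow> a < b \<Longrightarrow> b \<le> j \<Longrightarrow> x b < x a"
  obtains \<epsilon> where "0 < \<epsilon>"
    and "\<And>P a k. degree P = j \<Longrightarrow> lead_coeff P = 1 \<Longrightarrow>
          (\<And>m. m \<in> {1..j} \<Longrightarrow> \<bar>poly P (x m)\<bar> \<le> a m) \<Longrightarrow>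
          (\<And>m. m \<in> {1..j} \<Longrightarrow> 0 < a m \<and> a m \<le> \<epsilon>) \<Longrightarrow> k \<in> {1..j} \<Longrightarrow>
          \<bar>rev (sorted_list_of_set {r. poly P r = 0}) ! (k - 1) - x k\<bar>
            < 4 * a k / \<bar>poly (node_poly x ({1..j} - {k})) (x k)\<bar>"
proof (rule radius_around_nodes[where j = j and x = x, OF dec])
  let ?L = "\<lambda>m. node_poly x ({1..j} - {m})"
  let ?c = "\<lambda>m. \<bar>poly (node_poly x ({1..j} - {m})) (x m)\<bar>"
  fix \<delta> :: real
  assume "0 < \<delta>" and "\<delta> \<le> 1"
    and L_close: "\<And>m y. m \<in> {1..j} \<Longrightarrow> \<bar>y - x m\<bar> \<le> \<delta> \<Longrightarrow>
      \<bar>poly (?L m) y - poly (?L m) (x m)\<bar> \<le> ?c m / 4"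
    and separated: "\<And>a b. 1 \<le> a \<Longrightarrow> a < b \<Longrightarrow> b \<le> j \<Longrightarrow> 3 * \<delta> \<le> x a - x b"
  have inj: "inj_on x {1..j}"
    by (intro inj_onI) (metis atLeastAtMost_iff dec less_irrefl linorder_neqE_nat)
  have c_pos: "0 < ?c m" if "m \<in> {1..j}" for m
    using that inj by (simp, intro node_poly_nonzero) (auto dest: inj_onD)
  define B where "B = (1 + 2 * (\<Sum>i=1..j. \<bar>x i\<bar>)) ^ j"
  define S where "S = (\<Sum>l=1..j. B / ?c l)"
  have "0 \<le> B" unfolding B_def by (simp add: sum_nonneg)
  then have "0 \<le> S" unfolding S_def using c_pos by (auto intro!: sum_nonneg divide_nonneg_pos)
  obtain \<epsilon> where "0 < \<epsilon>"
    and \<epsilon>: "\<And>m. m \<in> {1..j} \<Longrightarrow> \<epsilon> \<le> min (\<delta> * ?c m / 4) (?c m / (4 * (S + 1)))"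
    using finite_pos_lower_bound[of "{1..j}" "\<lambda>m. min (\<delta> * ?c m / 4) (?c m / (4 * (S + 1)))"]
      c_pos \<open>0 < \<delta>\<close> \<open>0 \<le> S\<close> by auto
  show thesis
  proof (rule that[OF \<open>0 < \<epsilon>\<close>])
    fix P a k
    assume deg: "degree P = j" and monic: "lead_coeff P = 1" and k: "k \<in> {1..j}"
      and P_at_nodes: "\<And>m. m \<in> {1..j} \<Longrightarrow> \<bar>poly P (x m)\<bar> \<le> a m"
      and a: "\<And>m. m \<in> {1..j} \<Longrightarrow> 0 < a m \<and> a m \<le> \<epsilon>"
    have d_le: "4 * a m / ?c m \<le> \<delta>" if "m \<in> {1..j}" for m
      using a[OF that] \<epsilon>[OF that] c_pos[OF that] by (simp add: field_simps)
    have P_small: "\<bar>poly P (x l)\<bar> \<le> \<epsilon>" if "l \<in> {1..j}" for l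
      using P_at_nodes[OF that] a[OF that] by linarith
    show "\<bar>rev (sorted_list_of_set {r. poly P r = 0}) ! (k - 1) - x k\<bar>
            < 4 * a k / \<bar>poly (node_poly x ({1..j} - {k})) (x k)\<bar>"
    proof (rule monic_roots_within_radii[OF dec deg monic P_at_nodes _ _ _ _ k])
      show "\<bar>poly (?L m) y - poly (?L m) (x m)\<bar> \<le> ?c m / 4"
        if "m \<in> {1..j}" "\<bar>y - x m\<bar> \<le> 4 * a m / ?c m" for m y
        using L_close[OF that(1)] d_le[OF that(1)] that(2) by simp
      show "\<bar>\<Sum>l\<in>{1..j} - {m}. poly P (x l) * poly (node_poly x ({1..j} - {l, m})) y
                                / poly (?L l) (x l)\<bar> \<le> ?c m / 4"
        if "m \<in> {1..j}" "\<bar>y - x m\<bar> \<le> 4 * a m / ?c m" for m y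
      proof -
        have "\<bar>y - x m\<bar> \<le> 1" using that d_le[OF that(1)] \<open>\<delta> \<le> 1\<close> by simp
        then have "\<bar>\<Sum>l\<in>{1..j} - {m}. poly P (x l) * poly (node_poly x ({1..j} - {l, m})) y
                                / poly (?L l) (x l)\<bar> \<le> \<epsilon> * S"
          using lagrange_remainder_bound[OF that(1) _ P_small] by (simp add: B_def S_def)
        also have "\<dots> \<le> ?c m / (4 * (S + 1)) * (S + 1)"
          using \<epsilon>[OF that(1)] \<open>0 \<le> S\<close> \<open>0 < \<epsilon>\<close> by (intro mult_mono) auto
        also have "\<dots> = ?c m / 4" using \<open>0 \<le> S\<close> by (simp add: field_simps)
        finally show ?thesis .
      qed
      show "4 * a a' / ?c a' + 4 * a b / ?c b < x a' - x b" if "1 \<le> a'" "a' < b" "b \<le> j" for a' b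
        using d_le[of a'] d_le[of b] separated[OF that] that \<open>0 < \<delta>\<close> by auto
    qed (use a in auto)
  qed
qed

section \<open>Tilting the measure\<close>

context pos_weights
begin

lemma monic_OP_light_node_value_le:
  assumes "j < N" and dominated: "\<And>i. i \<in> {j<..N} \<Longrightarrow> w i \<le> u i" and i: "i \<in> {j<..N}"
  defines "K \<equiv> (\<Sum>l\<in>{j<..N}. u l * (poly (node_poly x {1..j}) (x l))\<^sup>2)"
  shows "\<bar>w i * poly (monic_OP N x w j) (x i)\<bar> \<le> sqrt (u i * K)"
proof -
  let ?P = "monic_OP N x w j" and ?Q = "node_poly x {1..j}"
  have split: "{1..N} = {1..j} \<union> {j<..N}" using \<open>j < N\<close> by auto
  have "disc_ip N x w ?Q ?Q = (\<Sum>l\<in>{j<..N}. w l * (poly ?Q (x l))\<^sup>2)"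
    unfolding disc_ip_def split
    by (subst sum.union_disjoint) (auto simp: node_poly_at_node power2_eq_square mult.assoc)
  also have "\<dots> \<le> K"
    unfolding K_def using dominated by (intro sum_mono mult_right_mono) auto
  moreover have "degree ?Q = j" by (simp add: degree_node_poly)
  ultimately have "disc_ip N x w ?P ?P \<le> K"
    using monic_OP_norm_minimal[OF is_monic_OP_monic_OP[OF \<open>j < N\<close>] _ lead_coeff_node_poly]
    by fastforce
  then have "w i * (w i * (poly ?P (x i))\<^sup>2) \<le> u i * K"
    using weighted_square_le_disc_ip[of i ?P] i weight_pos[of i] dominated[OF i]
      disc_ip_self_nonneg[of ?P]
    by (intro mult_mono) auto
  then have "(w i * poly ?P (x i))\<^sup>2 \<le> u i * K" by (simp add: power2_eq_square mult_ac)
  then show ?thesis using real_sqrt_le_mono by fastforce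
qed

lemma monic_OP_heavy_node_value_le:
  assumes "j < N" and m: "m \<in> {1..j}" and dominated: "\<And>i. i \<in> {j<..N} \<Longrightarrow> w i \<le> u i"
  defines "K \<equiv> (\<Sum>l\<in>{j<..N}. u l * (poly (node_poly x {1..j}) (x l))\<^sup>2)"
  shows "w m * \<bar>poly (monic_OP N x w j) (x m)\<bar> * \<bar>poly (node_poly x ({1..j} - {m})) (x m)\<bar>
    \<le> (\<Sum>i\<in>{j<..N}. sqrt (u i * K) * \<bar>poly (node_poly x ({1..j} - {m})) (x i)\<bar>)"
proof -
  let ?P = "monic_OP N x w j" and ?L = "node_poly x ({1..j} - {m})"
  define t where "t i = w i * poly ?P (x i) * poly ?L (x i)" for i
  have "degree ?L < j" using m by (simp add: degree_node_poly)
  then have "(\<Sum>i=1..N. t i) = 0"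
    using is_monic_OP_monic_OP[OF \<open>j < N\<close>] by (simp add: is_monic_OP_def disc_ip_def t_def)
  moreover have "(\<Sum>i=1..N. t i) = t m + (\<Sum>i\<in>{j<..N}. t i)"
  proof -
    have split: "{1..N} = {1..j} \<union> {j<..N}" using \<open>j < N\<close> by auto
    have "(\<Sum>i\<in>{1..j} - {m}. t i) = 0"
      by (intro sum.neutral) (auto simp: t_def node_poly_at_node)
    then have "(\<Sum>i=1..j. t i) = t m" using m by (simp add: sum.remove)
    moreover have "(\<Sum>i=1..N. t i) = (\<Sum>i=1..j. t i) + (\<Sum>i\<in>{j<..N}. t i)"
      unfolding split by (rule sum.union_disjoint) auto
    ultimately show ?thesis by simp
  qed
  ultimately have "\<bar>t m\<bar> = \<bar>\<Sum>i\<in>{j<..N}. t i\<bar>" by linarith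
  also have "\<dots> \<le> (\<Sum>i\<in>{j<..N}. \<bar>t i\<bar>)" by (rule sum_abs)
  also have "\<dots> \<le> (\<Sum>i\<in>{j<..N}. sqrt (u i * K) * \<bar>poly ?L (x i)\<bar>)"
    using monic_OP_light_node_value_le[OF \<open>j < N\<close> dominated] unfolding K_def t_def
    by (intro sum_mono) (simp add: abs_mult mult_right_mono)
  finally show ?thesis using weight_pos[of m] m \<open>j < N\<close> by (simp add: t_def abs_mult)
qed

end

lemma bound_from_eventual_bound:
  fixes f g :: "real \<Rightarrow> real"
  assumes eventually: "\<And>t. T \<le> t \<Longrightarrow> f t \<le> C * g t" and bounded: "\<And>t. f t \<le> M"
    and g_pos: "\<And>t. 0 < g t" and g_antimono: "\<And>s t. s \<le> t \<Longrightarrow> g t \<le> g s"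
  shows "\<exists>C'. \<forall>t. f t \<le> C' * g t"
proof (intro exI allI)
  fix t
  show "f t \<le> (\<bar>C\<bar> + \<bar>M\<bar> / g T) * g t"
  proof (cases "T \<le> t")
    case True
    have "C * g t \<le> \<bar>C\<bar> * g t" using g_pos[of t] by (intro mult_right_mono) auto
    then have "f t \<le> \<bar>C\<bar> * g t" using eventually[OF True] by linarith
    also have "\<dots> \<le> (\<bar>C\<bar> + \<bar>M\<bar> / g T) * g t"
      using g_pos[of t] g_pos[of T] by (intro mult_right_mono) auto
    finally show ?thesis .
  next
    case False
    then have "\<bar>M\<bar> / g T * g T \<le> \<bar>M\<bar> / g T * g t"
      using g_antimono[of t T] g_pos[of T] by (intro mult_left_mono) auto
    then have "f t \<le> \<bar>M\<bar> / g T * g t" using bounded[of t] g_pos[of T] by auto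
    also have "\<dots> \<le> (\<bar>C\<bar> + \<bar>M\<bar> / g T) * g t" using g_pos[of t] by (intro mult_right_mono) auto
    finally show ?thesis .
  qed
qed

lemma exp_decay_below:
  fixes A g \<epsilon> :: real
  assumes "0 < g" and "0 < A" and "0 < \<epsilon>"
  shows "\<exists>T. \<forall>t\<ge>T. A * exp (- 2 * t * g) \<le> \<epsilon>"
proof (intro exI allI impI)
  fix t assume "ln (A / \<epsilon>) / (2 * g) \<le> t"
  then have "ln (A / \<epsilon>) \<le> 2 * t * g" using \<open>0 < g\<close> by (simp add: field_simps)
  then have "exp (ln (A / \<epsilon>)) \<le> exp (2 * t * g)" by simp
  then have "A / \<epsilon> \<le> exp (2 * t * g)" using assms by simp
  then show "A * exp (- 2 * t * g) \<le> \<epsilon>" using assms by (simp add: exp_minus field_simps)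
qed

locale tilted_measure =
  fixes N :: nat and x rho :: "nat \<Rightarrow> real"
  assumes nodes_decreasing: "\<And>i j. 1 \<le> i \<Longrightarrow> i < j \<Longrightarrow> j \<le> N \<Longrightarrow> x j < x i"
    and rho_pos: "\<And>i. 1 \<le> i \<Longrightarrow> i \<le> N \<Longrightarrow> 0 < rho i"
begin

(* The weights of rho_t up to a positive factor, normalised so that the weights of the nodes
   beyond j stay bounded as t grows. *)
definition rescaled_weight :: "nat \<Rightarrow> real \<Rightarrow> nat \<Rightarrow> real" where
  "rescaled_weight j t i = rho i * exp (2 * t * (x i - x (j + 1)))"

lemma nodes_inj: "inj_on x {1..N}"
  by (intro inj_onI) (metis atLeastAtMost_iff nodes_decreasing less_irrefl linorder_neqE_nat)

lemma pos_weights_rescaled: "pos_weights N x (rescaled_weight j t)"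
  using rho_pos nodes_inj by unfold_locales (simp add: rescaled_weight_def)

lemma OP_zero_tilt_weight_eq:
  assumes "0 < N"
  shows "OP_zero N x (tilt_weight N x rho t) j k = OP_zero N x (rescaled_weight j t) j k"
proof -
  define Z where "Z = (\<Sum>l=1..N. rho l * exp (2 * t * x l))"
  have "0 < Z" unfolding Z_def using rho_pos assms by (intro sum_pos) auto
  have "tilt_weight N x rho t i = exp (2 * t * x (j + 1)) / Z * rescaled_weight j t i" for i
    unfolding tilt_weight_def rescaled_weight_def Z_def[symmetric]
    by (simp add: right_diff_distrib exp_diff)
  then have tilt_eq: "tilt_weight N x rho t = (\<lambda>i. exp (2 * t * x (j + 1)) / Z * rescaled_weight j t i)"
    by auto
  have "0 < exp (2 * t * x (j + 1)) / Z" using \<open>0 < Z\<close> by simp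
  note scale = monic_OP_scale_weights[OF this, of N x "rescaled_weight j t" j]
  show ?thesis unfolding OP_zero_def tilt_eq scale ..
qed

lemma rescaled_weight_le:
  assumes "0 \<le> t" and "i \<in> {j<..N}"
  shows "rescaled_weight j t i \<le> rho i"
proof -
  have "x i \<le> x (j + 1)" using nodes_decreasing[of "j + 1" i] assms(2) by (cases "i = j + 1") auto
  then have "exp (2 * t * (x i - x (j + 1))) \<le> 1" using assms(1) by (simp add: mult_nonneg_nonpos)
  then show ?thesis using rho_pos[of i] assms(2) by (simp add: rescaled_weight_def mult_left_le)
qed

lemma rescaled_monic_OP_decay:
  assumes "j < N"
  obtains A where "0 < A" and "\<And>t m. 0 \<le> t \<Longrightarrow> m \<in> {1..j} \<Longrightarrow>
    \<bar>poly (monic_OP N x (rescaled_weight j t) j) (x m)\<bar> \<le> A * exp (- 2 * t * (x m - x (j + 1)))"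
proof -
  define K where "K = (\<Sum>l\<in>{j<..N}. rho l * (poly (node_poly x {1..j}) (x l))\<^sup>2)"
  define R where
    "R m = (\<Sum>i\<in>{j<..N}. sqrt (rho i * K) * \<bar>poly (node_poly x ({1..j} - {m})) (x i)\<bar>)" for m
  define c where "c m = \<bar>poly (node_poly x ({1..j} - {m})) (x m)\<bar>" for m
  have c_pos: "0 < c m" if "m \<in> {1..j}" for m
    unfolding c_def using that inj_on_subset[OF nodes_inj, of "{1..j}"] assms
    by (simp, intro node_poly_nonzero) (auto dest: inj_onD)
  have "0 \<le> K" unfolding K_def using rho_pos by (intro sum_nonneg) (simp add: less_imp_le)
  then have R_nonneg: "0 \<le> R m" for m
    unfolding R_def using rho_pos
    by (intro sum_nonneg mult_nonneg_nonneg real_sqrt_ge_zero) (auto intro: less_imp_le)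
  have term_nonneg: "0 \<le> R m / (rho m * c m)" if "m \<in> {1..j}" for m
    using R_nonneg[of m] c_pos[OF that] rho_pos[of m] that assms by simp
  define A where "A = 1 + (\<Sum>m=1..j. R m / (rho m * c m))"
  show thesis
  proof (rule that)
    show "0 < A" unfolding A_def using term_nonneg by (intro add_pos_nonneg sum_nonneg) auto
    fix t :: real and m :: nat assume "0 \<le> t" and m: "m \<in> {1..j}"
    let ?P = "monic_OP N x (rescaled_weight j t) j" and ?E = "exp (- 2 * t * (x m - x (j + 1)))"
    have "rescaled_weight j t m * \<bar>poly ?P (x m)\<bar> * c m \<le> R m"
      using pos_weights.monic_OP_heavy_node_value_le[OF pos_weights_rescaled assms m
          rescaled_weight_le[OF \<open>0 \<le> t\<close>]]
      by (simp add: R_def K_def c_def)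
    moreover have "?E = inverse (exp (2 * t * (x m - x (j + 1))))"
      by (simp flip: exp_minus)
    then have "rescaled_weight j t m = rho m / ?E"
      by (simp add: rescaled_weight_def divide_inverse)
    ultimately have "\<bar>poly ?P (x m)\<bar> \<le> R m / (rho m * c m) * ?E"
      using rho_pos[of m] c_pos[OF m] m assms by (simp add: field_simps)
    also have "\<dots> \<le> A * ?E"
    proof (intro mult_right_mono)
      have "R m / (rho m * c m) \<le> (\<Sum>l=1..j. R l / (rho l * c l))"
        by (rule member_le_sum[OF m]) (use term_nonneg in auto)
      then show "R m / (rho m * c m) \<le> A" unfolding A_def by linarith
    qed simp
    finally show "\<bar>poly ?P (x m)\<bar> \<le> A * ?E" .
  qed
qed

lemma tilted_OP_zero_eventually_close:
  assumes "j < N" and k: "k \<in> {1..j}"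
  shows "\<exists>C T. \<forall>t\<ge>T. \<bar>OP_zero N x (tilt_weight N x rho t) j k - x k\<bar>
                    \<le> C * exp (- 2 * t * (x k - x (j + 1)))"
proof -
  obtain A where "0 < A" and decay: "\<And>t m. 0 \<le> t \<Longrightarrow> m \<in> {1..j} \<Longrightarrow>
      \<bar>poly (monic_OP N x (rescaled_weight j t) j) (x m)\<bar> \<le> A * exp (- 2 * t * (x m - x (j + 1)))"
    by (rule rescaled_monic_OP_decay[OF \<open>j < N\<close>]) (rule that)
  have dec: "\<And>a b. 1 \<le> a \<Longrightarrow> a < b \<Longrightarrow> b \<le> j \<Longrightarrow> x b < x a"
    using nodes_decreasing \<open>j < N\<close> by simp
  show ?thesis
  proof (rule monic_roots_near_nodes[where j = j and x = x, OF dec])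
    fix \<epsilon> :: real
    assume "0 < \<epsilon>" and roots_near: "\<And>P a k. degree P = j \<Longrightarrow> lead_coeff P = 1 \<Longrightarrow>
      (\<And>m. m \<in> {1..j} \<Longrightarrow> \<bar>poly P (x m)\<bar> \<le> a m) \<Longrightarrow>
      (\<And>m. m \<in> {1..j} \<Longrightarrow> 0 < a m \<and> a m \<le> \<epsilon>) \<Longrightarrow> k \<in> {1..j} \<Longrightarrow>
      \<bar>rev (sorted_list_of_set {r. poly P r = 0}) ! (k - 1) - x k\<bar>
        < 4 * a k / \<bar>poly (node_poly x ({1..j} - {k})) (x k)\<bar>"
    have "x (j + 1) < x j" using nodes_decreasing[of j "j + 1"] k \<open>j < N\<close> by simp
    then obtain T where T: "\<And>t. T \<le> t \<Longrightarrow> A * exp (- 2 * t * (x j - x (j + 1))) \<le> \<epsilon>"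
      using exp_decay_below[of "x j - x (j + 1)" A \<epsilon>] \<open>0 < A\<close> \<open>0 < \<epsilon>\<close> by auto
    show ?thesis
    proof (intro exI allI impI)
      fix t assume t: "max T 0 \<le> t"
      let ?P = "monic_OP N x (rescaled_weight j t) j"
      have "is_monic_OP N x (rescaled_weight j t) j ?P"
        using pos_weights.is_monic_OP_monic_OP[OF pos_weights_rescaled \<open>j < N\<close>] .
      then have "degree ?P = j" and "lead_coeff ?P = 1" unfolding is_monic_OP_def by blast+
      moreover have "A * exp (- 2 * t * (x m - x (j + 1))) \<le> \<epsilon>" if "m \<in> {1..j}" for m
      proof -
        have "x j \<le> x m" using nodes_decreasing[of m j] that \<open>j < N\<close> by (cases "m = j") auto
        then have "exp (- 2 * t * (x m - x (j + 1))) \<le> exp (- 2 * t * (x j - x (j + 1)))"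
          using t by (simp add: mult_left_mono)
        then have "A * exp (- 2 * t * (x m - x (j + 1))) \<le> A * exp (- 2 * t * (x j - x (j + 1)))"
          using \<open>0 < A\<close> by (intro mult_left_mono) auto
        then show ?thesis using T[of t] t by simp
      qed
      ultimately have "\<bar>OP_zero N x (rescaled_weight j t) j k - x k\<bar>
          < 4 * (A * exp (- 2 * t * (x k - x (j + 1)))) / \<bar>poly (node_poly x ({1..j} - {k})) (x k)\<bar>"
        unfolding OP_zero_def using decay t \<open>0 < A\<close> k by (intro roots_near) auto
      then show "\<bar>OP_zero N x (tilt_weight N x rho t) j k - x k\<bar>
          \<le> 4 * A / \<bar>poly (node_poly x ({1..j} - {k})) (x k)\<bar> * exp (- 2 * t * (x k - x (j + 1)))"
        using OP_zero_tilt_weight_eq[of t j k] \<open>j < N\<close> by simp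
    qed
  qed
qed

lemma tilted_OP_zero_bounded:
  assumes "j < N"
  shows "\<exists>M. \<forall>t. \<bar>OP_zero N x (tilt_weight N x rho t) j k - x k\<bar> \<le> M"
proof (intro exI allI)
  fix t
  have "\<bar>OP_zero N x (rescaled_weight j t) j k\<bar> \<le> (\<Sum>i=1..N. \<bar>x i\<bar>) + (\<Sum>m\<le>k. \<bar>([] :: real list) ! m\<bar>)"
    using pos_weights.abs_OP_zero_le[OF pos_weights_rescaled assms] .
  then show "\<bar>OP_zero N x (tilt_weight N x rho t) j k - x k\<bar>
      \<le> (\<Sum>i=1..N. \<bar>x i\<bar>) + (\<Sum>m\<le>k. \<bar>([] :: real list) ! m\<bar>) + \<bar>x k\<bar>"
    using OP_zero_tilt_weight_eq[of t j k] assms by simp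
qed

end

theorem theorem2p5:
  fixes N :: nat and x rho :: "nat \<Rightarrow> real"
  assumes "N \<ge> 2"
    and "\<And>i j. 1 \<le> i \<Longrightarrow> i < j \<Longrightarrow> j \<le> N \<Longrightarrow> x j < x i"
    and "\<And>i. 1 \<le> i \<Longrightarrow> i \<le> N \<Longrightarrow> rho i > 0"
    and "(\<Sum>i=1..N. rho i) = 1"
  shows "\<forall>j\<in>{1..N-1}. \<forall>k\<in>{1..j}. \<exists>C. \<forall>t\<ge>0.
           \<bar>OP_zero N x (tilt_weight N x rho t) j k - x k\<bar>
             \<le> C * exp (- 2 * t * (x k - x (j + 1)))"
proof (intro ballI)
  fix j k assume j: "j \<in> {1..N-1}" and k: "k \<in> {1..j}"
  interpret tilted_measure N x rho using assms(2,3) by unfold_locales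
  have "j < N" using j by auto
  obtain C T where close: "\<And>t. T \<le> t \<Longrightarrow> \<bar>OP_zero N x (tilt_weight N x rho t) j k - x k\<bar>
                                          \<le> C * exp (- 2 * t * (x k - x (j + 1)))"
    using tilted_OP_zero_eventually_close[OF \<open>j < N\<close> k] by blast
  obtain M where bounded: "\<And>t. \<bar>OP_zero N x (tilt_weight N x rho t) j k - x k\<bar> \<le> M"
    using tilted_OP_zero_bounded[OF \<open>j < N\<close>] by blast
  have "x (j + 1) < x k" using nodes_decreasing[of k "j + 1"] k \<open>j < N\<close> by auto
  then have "\<exists>C'. \<forall>t. \<bar>OP_zero N x (tilt_weight N x rho t) j k - x k\<bar>
                     \<le> C' * exp (- 2 * t * (x k - x (j + 1)))"
    by (intro bound_from_eventual_bound[where g = "\<lambda>t. exp (- 2 * t * (x k - x (j + 1)))",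
          OF close bounded])
      (simp_all add: mult_right_mono)
  then show "\<exists>C. \<forall>t\<ge>0. \<bar>OP_zero N x (tilt_weight N x rho t) j k - x k\<bar>
                          \<le> C * exp (- 2 * t * (x k - x (j + 1)))"
    by blast
qed

end
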